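(* Let $G$ be a finite group, $p$ a prime, and suppose $G'\not\subseteq Z(G)$ and one of the following holds: (a) $G'\cong C_{p^2}$ and $\gcd(p-1,|G|)=1$; (b) $G'\cong C_p\times C_p$ and $\gcd(p^2-1,|G|)=1$. Then $|G/C_G(G')|=|G'\cap Z(G)|=|\mathrm{Cl}_G(x)|=p$ for all $x\in G'\setminus Z(G)$.
   Context: $G'$ is the commutator subgroup, $Z(G)$ the center, $C_G(G')$ the centralizer of $G'$ in $G$, and $\mathrm{Cl}_G(x)$ the conjugacy class of $x$ in $G$. *)

theory Defs
  imports "HOL-Algebra.Algebra"
begin

definition group_center :: "('a, 'b) monoid_scheme \<Rightarrow> 'a set" where
  "group_center G = {z \<in> carrier G. \<forall>g \<in> carrier G. z \<otimes>\<^bsub>G\<^esub> g = g \<otimes>\<^bsub>G\<^esub> z}"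

definition centralizer :: "('a, 'b) monoid_scheme \<Rightarrow> 'a set \<Rightarrow> 'a set" where
  "centralizer G H = {g \<in> carrier G. \<forall>h \<in> H. g \<otimes>\<^bsub>G\<^esub> h = h \<otimes>\<^bsub>G\<^esub> g}"

definition conj_class :: "('a, 'b) monoid_scheme \<Rightarrow> 'a \<Rightarrow> 'a set" where
  "conj_class G x = {g \<otimes>\<^bsub>G\<^esub> x \<otimes>\<^bsub>G\<^esub> inv\<^bsub>G\<^esub> g | g. g \<in> carrier G}"

abbreviation commutator_subgroup :: "('a, 'b) monoid_scheme \<Rightarrow> 'a set" where
  "commutator_subgroup G \<equiv> derived G (carrier G)"

end

theory Submission
  imports Defs
begin

text \<open>
  Let \<open>A\<close> be a non-central normal subgroup of order \<open>p\<^sup>2\<close> and \<open>C = C\<^sub>G(A)\<close>.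
  A subgroup \<open>Q\<close> of prime power order \<open>q\<^sup>a\<close>, \<open>q \<noteq> p\<close>, acts on \<open>A\<close> by conjugation, and its
  fixed points form a subgroup of \<open>A\<close> whose order is congruent to \<open>p\<^sup>2\<close> modulo \<open>q\<close>.
  If \<open>Q\<close> does not centralize \<open>A\<close>, that order is \<open>1\<close> or \<open>p\<close>, so \<open>q\<close> divides \<open>p\<^sup>2 - 1\<close>
  or \<open>p(p - 1)\<close>; for cyclic \<open>A\<close> one refines the first case by counting fixed points among
  the \<open>p\<close> elements of order dividing \<open>p\<close>, getting \<open>q | p - 1\<close>. The coprimality hypothesis
  rules all of this out, so every Sylow subgroup for a prime \<open>q \<noteq> p\<close> lies in \<open>C\<close>, and
  \<open>|G : C|\<close> is a power of \<open>p\<close>.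

  Since \<open>C \<subseteq> C\<^sub>G(x)\<close> for \<open>x \<in> A\<close>, all conjugacy classes inside \<open>A\<close> then have \<open>p\<close>-power size, so
  \<open>|A \<inter> Z(G)| \<equiv> p\<^sup>2 (mod p)\<close>, which forces \<open>|A \<inter> Z(G)| = p\<close>. A non-central class in \<open>A\<close> avoids
  \<open>A \<inter> Z(G)\<close>, so it has fewer than \<open>p\<^sup>2\<close> elements and hence exactly \<open>p\<close>. Finally, an element
  commuting with a non-central \<open>x \<in> A\<close> centralizes a subgroup of \<open>A\<close> with more than \<open>p\<close>
  elements, i.e. all of \<open>A\<close>; thus \<open>C\<^sub>G(x) = C\<close> and \<open>|G : C| = |Cl\<^sub>G(x)| = p\<close>.
\<close>

lemma (in group_action) orbit_subset: "x \<in> E \<Longrightarrow> orbit G \<phi> x \<subseteq> E"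
  unfolding orbit_def using element_image by blast

lemma (in group_action) orbit_eq_of_mem:
  assumes "x \<in> E" "y \<in> orbit G \<phi> x"
  shows "orbit G \<phi> y = orbit G \<phi> x"
proof -
  have y: "y \<in> E" using assms orbit_subset by blast
  then have "x \<in> orbit G \<phi> y" using assms orbit_sym by blast
  then show ?thesis
    using assms y orbit_subset orbit_trans by (meson subsetD subset_antisym subsetI)
qed

lemma (in group_action) card_diff_fixed_points_dvd:
  assumes "finite W" "W \<subseteq> E"
    and invariant: "\<And>g x. g \<in> carrier G \<Longrightarrow> x \<in> W \<Longrightarrow> \<phi> g x \<in> W"
    and orbit_dvd: "\<And>x. x \<in> W \<Longrightarrow> orbit G \<phi> x \<noteq> {x} \<Longrightarrow> r dvd card (orbit G \<phi> x)"
  shows "r dvd card W - card {x \<in> W. orbit G \<phi> x = {x}}"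
proof -
  let ?F = "{x \<in> W. orbit G \<phi> x = {x}}"
  let ?O = "orbit G \<phi> ` (W - ?F)"
  have orbit_W: "orbit G \<phi> x \<subseteq> W" if "x \<in> W" for x
    using that invariant unfolding orbit_def by blast
  have union: "\<Union> ?O = W - ?F"
  proof
    show "\<Union> ?O \<subseteq> W - ?F"
    proof
      fix y assume "y \<in> \<Union> ?O"
      then obtain x where x: "x \<in> W" "x \<notin> ?F" and y: "y \<in> orbit G \<phi> x" by blast
      have xE: "x \<in> E" using x(1) assms(2) by blast
      have "orbit G \<phi> y = orbit G \<phi> x" using orbit_eq_of_mem[OF xE y] .
      moreover have "x \<in> orbit G \<phi> x" using orbit_refl[OF xE] .
      ultimately have "orbit G \<phi> y \<noteq> {y}" using x by auto
      moreover have "y \<in> W" using orbit_W[OF x(1)] y by blast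
      ultimately show "y \<in> W - ?F" by blast
    qed
    show "W - ?F \<subseteq> \<Union> ?O" using orbit_refl assms(2) by blast
  qed
  have "disjoint ?O"
  proof (rule pairwiseI)
    fix B1 B2 assume "B1 \<in> ?O" "B2 \<in> ?O" "B1 \<noteq> B2"
    then obtain x1 x2 where x: "x1 \<in> E" "x2 \<in> E"
      and B: "B1 = orbit G \<phi> x1" "B2 = orbit G \<phi> x2"
      using assms(2) by blast
    have "orbit G \<phi> x1 = orbit G \<phi> x2" if "y \<in> B1" "y \<in> B2" for y
      using that B orbit_eq_of_mem x by metis
    then show "disjnt B1 B2"
      using \<open>B1 \<noteq> B2\<close> B unfolding disjnt_def by blast
  qed
  moreover have "finite B" if "B \<in> ?O" for B
    using that orbit_W \<open>finite W\<close> finite_subset by blast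
  ultimately have "card (\<Union> ?O) = (\<Sum>B \<in> ?O. card B)"
    by (rule card_Union_disjoint)
  moreover have "r dvd (\<Sum>B \<in> ?O. card B)"
    using orbit_dvd by (intro dvd_sum) auto
  ultimately have "r dvd card (W - ?F)"
    by (simp only: union)
  then show ?thesis
    using card_Diff_subset[of ?F W] \<open>finite W\<close> by (simp add: finite_subset)
qed

lemma (in group_action) prime_dvd_card_orbit:
  assumes q: "Factorial_Ring.prime q" and order: "order G = q ^ a"
    and x: "x \<in> E" and nontrivial: "orbit G \<phi> x \<noteq> {x}"
  shows "q dvd card (orbit G \<phi> x)"
proof -
  have "card (orbit G \<phi> x) dvd q ^ a"
    using orbit_stabilizer_theorem[OF x] order by (metis dvd_triv_left)
  then obtain i where i: "card (orbit G \<phi> x) = q ^ i"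
    using divides_primepow_nat[OF q] by blast
  have "card (orbit G \<phi> x) \<noteq> 1"
    using nontrivial orbit_refl[OF x] by (metis card_1_singletonE singletonD)
  then have "i > 0" using i by (metis gr0I power_0)
  then show ?thesis by (simp add: i)
qed

lemma (in group_action) card_fixed_points_cong_prime_power_order:
  assumes "Factorial_Ring.prime q" "order G = q ^ a" "finite W" "W \<subseteq> E"
    and "\<And>g x. g \<in> carrier G \<Longrightarrow> x \<in> W \<Longrightarrow> \<phi> g x \<in> W"
  shows "q dvd card W - card {x \<in> W. orbit G \<phi> x = {x}}"
  using assms by (intro card_diff_fixed_points_dvd prime_dvd_card_orbit) auto

lemma card_roots_of_unity_integer_mod_group:
  fixes d e :: nat
  assumes "d > 0" "e > 0"
  shows "card {k \<in> carrier (integer_mod_group (d * e)). k [^]\<^bsub>integer_mod_group (d * e)\<^esub> d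
           = \<one>\<^bsub>integer_mod_group (d * e)\<^esub>} = d"
proof -
  have "{k \<in> carrier (integer_mod_group (d * e)). k [^]\<^bsub>integer_mod_group (d * e)\<^esub> d
           = \<one>\<^bsub>integer_mod_group (d * e)\<^esub>}
      = {k \<in> {0..<int d * int e}. int d * k mod (int d * int e) = 0}"
    using assms by (simp add: carrier_integer_mod_group)
  also have "\<dots> = (\<lambda>j. int e * j) ` {0..<int d}"
  proof (rule Set.set_eqI)
    fix k
    have "int d * k mod (int d * int e) = 0 \<longleftrightarrow> int e dvd k"
      using assms by (simp add: mod_eq_0_iff_dvd)
    then show "k \<in> {k \<in> {0..<int d * int e}. int d * k mod (int d * int e) = 0}
        \<longleftrightarrow> k \<in> (\<lambda>j. int e * j) ` {0..<int d}"
      using assms by (auto simp: dvd_def image_iff zero_le_mult_iff mult.commute[of "int e"])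
  qed
  finally have eq: "{k \<in> carrier (integer_mod_group (d * e)). k [^]\<^bsub>integer_mod_group (d * e)\<^esub> d
           = \<one>\<^bsub>integer_mod_group (d * e)\<^esub>} = (\<lambda>j. int e * j) ` {0..<int d}" .
  have "inj_on (\<lambda>j. int e * j) {0..<int d}" using assms by (auto simp: inj_on_def)
  then have "card ((\<lambda>j. int e * j) ` {0..<int d}) = d" by (simp add: card_image)
  then show ?thesis by (simp only: eq)
qed

definition conjugation :: "('a, 'b) monoid_scheme \<Rightarrow> 'a \<Rightarrow> 'a \<Rightarrow> 'a"
  where "conjugation G g = (\<lambda>x \<in> carrier G. g \<otimes>\<^bsub>G\<^esub> x \<otimes>\<^bsub>G\<^esub> inv\<^bsub>G\<^esub> g)"

context group
begin

lemma conjugate_eq_iff_commute: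
  assumes "g \<in> carrier G" "x \<in> carrier G"
  shows "g \<otimes> x \<otimes> inv g = x \<longleftrightarrow> g \<otimes> x = x \<otimes> g"
  using assms by (metis inv_solve_right m_closed)

lemma nat_pow_conjugate:
  assumes "h \<in> carrier G" "x \<in> carrier G"
  shows "(h \<otimes> x \<otimes> inv h) [^] (n::nat) = h \<otimes> x [^] n \<otimes> inv h"
proof (induction n)
  case 0 then show ?case using assms by simp
next
  case (Suc n)
  have cancel: "inv h \<otimes> (h \<otimes> y) = y" if "y \<in> carrier G" for y
    using assms that by (simp add: m_assoc[symmetric])
  have "(h \<otimes> x \<otimes> inv h) [^] Suc n = (h \<otimes> x [^] n \<otimes> inv h) \<otimes> (h \<otimes> x \<otimes> inv h)"
    using Suc by simp
  also have "\<dots> = h \<otimes> (x [^] n \<otimes> x) \<otimes> inv h"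
    using assms by (simp add: m_assoc cancel)
  finally show ?case by simp
qed

lemma centralizer_subgroup:
  assumes "S \<subseteq> carrier G"
  shows "subgroup (centralizer G S) G"
proof (rule subgroupI)
  show "centralizer G S \<subseteq> carrier G" by (auto simp: centralizer_def)
  have "\<one> \<in> centralizer G S" using assms by (auto simp: centralizer_def)
  then show "centralizer G S \<noteq> {}" by blast
next
  fix g assume g: "g \<in> centralizer G S"
  have "inv g \<otimes> s = s \<otimes> inv g" if s: "s \<in> S" for s
  proof -
    have gs: "g \<in> carrier G" "s \<in> carrier G" using g s assms by (auto simp: centralizer_def)
    have "g \<otimes> s = s \<otimes> g" using g s by (simp add: centralizer_def)
    then have "g \<otimes> s \<otimes> inv g = s" using conjugate_eq_iff_commute[OF gs] by simp
    then have "inv g \<otimes> s = inv g \<otimes> (g \<otimes> s \<otimes> inv g)" by simp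
    also have "\<dots> = s \<otimes> inv g" using gs by (simp add: m_assoc[symmetric])
    finally show ?thesis .
  qed
  then show "inv g \<in> centralizer G S" using g by (auto simp: centralizer_def)
next
  fix g h assume g: "g \<in> centralizer G S" and h: "h \<in> centralizer G S"
  have "g \<otimes> h \<otimes> s = s \<otimes> (g \<otimes> h)" if s: "s \<in> S" for s
  proof -
    have ghs: "g \<in> carrier G" "h \<in> carrier G" "s \<in> carrier G"
      using g h s assms by (auto simp: centralizer_def)
    have "g \<otimes> h \<otimes> s = g \<otimes> (s \<otimes> h)" using h s ghs by (simp add: centralizer_def m_assoc)
    also have "\<dots> = s \<otimes> g \<otimes> h" using g s ghs by (simp add: centralizer_def m_assoc[symmetric])
    finally show ?thesis using ghs by (simp add: m_assoc)
  qed
  then show "g \<otimes> h \<in> centralizer G S" using g h by (auto simp: centralizer_def)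
qed

lemma subset_centralizer_iff:
  "S \<subseteq> carrier G \<Longrightarrow> T \<subseteq> carrier G \<Longrightarrow> S \<subseteq> centralizer G T \<longleftrightarrow> T \<subseteq> centralizer G S"
  unfolding centralizer_def by (auto simp: subset_eq)

lemma group_center_eq_centralizer: "group_center G = centralizer G (carrier G)"
  by (auto simp: group_center_def centralizer_def)

lemma conjugation_action: "group_action G (carrier G) (conjugation G)"
proof -
  have "conjugation G = (\<lambda>g. \<lambda>x \<in> carrier G. g \<otimes> x \<otimes> inv g)"
    by (rule ext) (simp add: conjugation_def)
  then show ?thesis using action_by_conjugation by simp
qed

lemma conjugation_action_subgroup:
  "subgroup H G \<Longrightarrow> group_action (G\<lparr>carrier := H\<rparr>) (carrier G) (conjugation G)"
  by (rule group_action.induced_action[OF conjugation_action])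

lemma orbit_conjugation_subgroup:
  "x \<in> carrier G \<Longrightarrow> orbit (G\<lparr>carrier := H\<rparr>) (conjugation G) x = {h \<otimes> x \<otimes> inv h | h. h \<in> H}"
  by (auto simp: orbit_def conjugation_def)

lemma orbit_conjugation_eq_singleton_iff:
  assumes H: "subgroup H G" and x: "x \<in> carrier G"
  shows "orbit (G\<lparr>carrier := H\<rparr>) (conjugation G) x = {x} \<longleftrightarrow> x \<in> centralizer G H"
proof -
  have "orbit (G\<lparr>carrier := H\<rparr>) (conjugation G) x = {x} \<longleftrightarrow> (\<forall>h \<in> H. h \<otimes> x \<otimes> inv h = x)"
    using subgroup.one_closed[OF H] x by (auto simp: orbit_conjugation_subgroup) force
  also have "\<dots> \<longleftrightarrow> (\<forall>h \<in> H. x \<otimes> h = h \<otimes> x)"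
    using x conjugate_eq_iff_commute subgroup.subset[OF H] by (metis subsetD)
  also have "\<dots> \<longleftrightarrow> x \<in> centralizer G H"
    using x by (simp add: centralizer_def)
  finally show ?thesis .
qed

lemma conj_class_eq_orbit:
  "x \<in> carrier G \<Longrightarrow> conj_class G x = orbit G (conjugation G) x"
  by (auto simp: orbit_def conjugation_def conj_class_def)

lemma conj_class_self: "x \<in> carrier G \<Longrightarrow> x \<in> conj_class G x"
  using group_action.orbit_refl[OF conjugation_action] by (simp add: conj_class_eq_orbit)

lemma conj_class_eq_singleton_iff:
  "x \<in> carrier G \<Longrightarrow> conj_class G x = {x} \<longleftrightarrow> x \<in> group_center G"
  using orbit_conjugation_eq_singleton_iff[OF subgroup_self]
  by (simp add: conj_class_eq_orbit group_center_eq_centralizer)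

lemma card_conj_class_eq_1_iff:
  assumes "x \<in> carrier G"
  shows "card (conj_class G x) = 1 \<longleftrightarrow> x \<in> group_center G"
  using conj_class_self[OF assms] conj_class_eq_singleton_iff[OF assms]
  by (metis card_1_singletonE is_singletonI is_singleton_altdef singletonD)

lemma stabilizer_conjugation:
  "x \<in> carrier G \<Longrightarrow> stabilizer G (conjugation G) x = centralizer G {x}"
  using conjugate_eq_iff_commute by (auto simp: stabilizer_def conjugation_def centralizer_def)

lemma card_conj_class_mult_card_centralizer:
  "x \<in> carrier G \<Longrightarrow> card (conj_class G x) * card (centralizer G {x}) = order G"
  using group_action.orbit_stabilizer_theorem[OF conjugation_action]
  by (simp add: conj_class_eq_orbit stabilizer_conjugation)

lemma card_centralized_cong_prime_power:
  assumes Q: "subgroup Q G" "card Q = q ^ a" and q: "Factorial_Ring.prime q"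
    and W: "finite W" "W \<subseteq> carrier G"
    and invariant: "\<And>h y. h \<in> Q \<Longrightarrow> y \<in> W \<Longrightarrow> h \<otimes> y \<otimes> inv h \<in> W"
  shows "q dvd card W - card (W \<inter> centralizer G Q)"
proof -
  interpret Q: group_action "G\<lparr>carrier := Q\<rparr>" "carrier G" "conjugation G"
    using conjugation_action_subgroup[OF Q(1)] .
  have "{x \<in> W. orbit (G\<lparr>carrier := Q\<rparr>) (conjugation G) x = {x}} = W \<inter> centralizer G Q"
    using W orbit_conjugation_eq_singleton_iff[OF Q(1)] by blast
  moreover have "q dvd card W - card {x \<in> W. orbit (G\<lparr>carrier := Q\<rparr>) (conjugation G) x = {x}}"
  proof (rule Q.card_fixed_points_cong_prime_power_order[OF q _ W])
    show "order (G\<lparr>carrier := Q\<rparr>) = q ^ a" using Q(2) by (simp add: order_def)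
    show "conjugation G h y \<in> W" if "h \<in> carrier (G\<lparr>carrier := Q\<rparr>)" "y \<in> W" for h y
      using that invariant W(2) by (auto simp: conjugation_def)
  qed
  ultimately show ?thesis by simp
qed

lemma card_subgroup_dvd_card:
  assumes "subgroup H G" "subgroup K G" "H \<subseteq> K"
  shows "card H dvd card K"
proof -
  interpret K: group "G\<lparr>carrier := K\<rparr>" using subgroup_imp_group[OF assms(2)] .
  have "subgroup H (G\<lparr>carrier := K\<rparr>)" using subgroup_incl assms by blast
  then have "card (rcosets\<^bsub>G\<lparr>carrier := K\<rparr>\<^esub> H) * card H = card K"
    using K.lagrange by (simp add: order_def)
  then show ?thesis by (metis dvd_triv_right)
qed

lemma index_dvd_index:
  assumes "finite (carrier G)" "subgroup H G" "subgroup K G" "H \<subseteq> K"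
  shows "card (rcosets K) dvd card (rcosets H)"
proof -
  obtain d where d: "card K = card H * d"
    using card_subgroup_dvd_card[OF assms(2-4)] by blast
  have "card H > 0"
    using assms(1,2) subgroup.one_closed finite_subset[OF subgroup.subset]
    by (metis card_gt_0_iff empty_iff)
  moreover have "card (rcosets H) * card H = card (rcosets K) * d * card H"
    using lagrange[OF assms(2)] lagrange[OF assms(3)] d by (simp add: ac_simps)
  ultimately show ?thesis by simp
qed

lemma card_conj_class_eq_index:
  assumes "finite (carrier G)" "x \<in> carrier G"
  shows "card (conj_class G x) = card (rcosets (centralizer G {x}))"
proof -
  have C: "subgroup (centralizer G {x}) G" using assms(2) by (simp add: centralizer_subgroup)
  then have "card (centralizer G {x}) > 0"
    using assms(1) subgroup.one_closed finite_subset[OF subgroup.subset]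
    by (metis card_gt_0_iff empty_iff)
  then show ?thesis
    using card_conj_class_mult_card_centralizer[OF assms(2)] lagrange[OF C]
    by (metis mult_cancel2 neq0_conv)
qed

lemma prime_not_dvd_index_if_contains_sylow:
  assumes finite: "finite (carrier G)" and q: "Factorial_Ring.prime q"
    and Q: "subgroup Q G" "card Q = q ^ multiplicity q (order G)"
    and C: "subgroup C G" "Q \<subseteq> C"
  shows "\<not> q dvd card (rcosets C)"
proof
  assume "q dvd card (rcosets C)"
  moreover have "card Q dvd card C" using card_subgroup_dvd_card[OF Q(1) C] .
  ultimately have "q * card Q dvd card (rcosets C) * card C" by (rule mult_dvd_mono)
  then have "q ^ Suc (multiplicity q (order G)) dvd order G"
    using lagrange[OF C(1)] Q(2) by simp
  moreover have "order G \<noteq> 0" using finite order_gt_0_iff_finite by simp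
  ultimately show False
    using q multiplicity_geI[of "order G" q] by (metis Suc_n_not_le_n not_prime_unit)
qed

lemma subgroup_of_prime_square_cases:
  assumes p: "Factorial_Ring.prime p" and A: "subgroup A G" "card A = p ^ 2"
    and B: "subgroup B G" "B \<subseteq> A"
  shows "card B = 1 \<or> card B = p \<or> B = A"
proof -
  have "card B dvd p ^ 2" using card_subgroup_dvd_card[OF B(1) A(1) B(2)] A(2) by simp
  then obtain i where i: "i \<le> 2" "card B = p ^ i" using divides_primepow_nat[OF p] by blast
  have "card A \<noteq> 0" using A(2) prime_gt_0_nat[OF p] by simp
  then have "finite A" by (meson card.infinite)
  consider "i = 0" | "i = 1" | "i = 2" using i(1) by linarith
  then show ?thesis
  proof cases
    case 3
    then have "card B = card A" using i(2) A(2) by simp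
    then show ?thesis using card_subset_eq[OF \<open>finite A\<close> B(2)] by blast
  qed (use i(2) in simp_all)
qed

lemma card_subgroup_eq_card_iso:
  "subgroup A G \<Longrightarrow> subgroup_generated G A \<cong> H \<Longrightarrow> card A = card (carrier H)"
  using iso_same_card by (fastforce simp: subgroup.carrier_subgroup_generated_subgroup)

lemma card_roots_of_unity_iso:
  fixes n :: nat
  assumes "f \<in> iso G H" "group H"
  shows "card {x \<in> carrier G. x [^] n = \<one>} = card {y \<in> carrier H. y [^]\<^bsub>H\<^esub> n = \<one>\<^bsub>H\<^esub>}"
proof -
  have hom: "f \<in> hom G H" and bij: "bij_betw f (carrier G) (carrier H)"
    using assms(1) by (auto simp: iso_def)
  have "f x [^]\<^bsub>H\<^esub> n = \<one>\<^bsub>H\<^esub> \<longleftrightarrow> x [^] n = \<one>" if x: "x \<in> carrier G" for x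
  proof -
    have "f x [^]\<^bsub>H\<^esub> n = f (x [^] n)" using hom_nat_pow[OF hom x is_group assms(2)] ..
    moreover have "\<one>\<^bsub>H\<^esub> = f \<one>" using hom_one[OF hom] assms(2) by simp
    ultimately show ?thesis
      using bij_betw_imp_inj_on[OF bij] x by (auto dest: inj_onD)
  qed
  then have "f ` {x \<in> carrier G. x [^] n = \<one>} = {y \<in> carrier H. y [^]\<^bsub>H\<^esub> n = \<one>\<^bsub>H\<^esub>}"
    using bij_betw_imp_surj_on[OF bij] by (auto simp: image_iff) (metis imageE)
  moreover have "inj_on f {x \<in> carrier G. x [^] n = \<one>}"
    using bij_betw_imp_inj_on[OF bij] by (rule inj_on_subset) auto
  ultimately show ?thesis using card_image by fastforce
qed

lemma card_roots_of_unity_cyclic: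
  assumes A: "subgroup A G" and iso: "subgroup_generated G A \<cong> integer_mod_group (d * e)"
    and "d > 0" "e > 0"
  shows "card {x \<in> A. x [^] d = \<one>} = d"
proof -
  obtain f where f: "f \<in> iso (subgroup_generated G A) (integer_mod_group (d * e))"
    using iso by (auto simp: is_iso_def)
  have "card {x \<in> carrier (subgroup_generated G A). x [^]\<^bsub>subgroup_generated G A\<^esub> d
      = \<one>\<^bsub>subgroup_generated G A\<^esub>}
    = card {k \<in> carrier (integer_mod_group (d * e)). k [^]\<^bsub>integer_mod_group (d * e)\<^esub> d
      = \<one>\<^bsub>integer_mod_group (d * e)\<^esub>}"
    by (rule group.card_roots_of_unity_iso[OF group_subgroup_generated f group_integer_mod_group])
  also have "\<dots> = d" by (rule card_roots_of_unity_integer_mod_group[OF assms(3,4)])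
  finally show ?thesis
    by (simp add: subgroup.carrier_subgroup_generated_subgroup[OF A] pow_subgroup_generated)
qed

end

text \<open>
  The second alternative of \<open>coprime\<close> covers cyclic \<open>A\<close>: a cyclic group of order \<open>p\<^sup>2\<close> has
  exactly \<open>p\<close> solutions of \<open>x\<^sup>p = 1\<close>.
\<close>

locale noncentral_normal_subgroup_of_order_prime_square = group G for G (structure) +
  fixes A :: "'a set" and p :: nat
  assumes finite_carrier: "finite (carrier G)"
    and normal: "A \<lhd> G"
    and prime: "Factorial_Ring.prime p"
    and card_A: "card A = p ^ 2"
    and not_central: "\<not> A \<subseteq> group_center G"
    and coprime: "coprime (p ^ 2 - 1) (order G)
      \<or> coprime (p - 1) (order G) \<and> card {x \<in> A. x [^] p = \<one>} = p"
begin

lemma subgroup_A: "subgroup A G"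
  using normal by (rule normal_imp_subgroup)

lemma A_subset: "A \<subseteq> carrier G"
  using subgroup_A by (rule subgroup.subset)

lemma finite_A: "finite A"
  using A_subset finite_carrier by (rule finite_subset)

lemma conjugate_in_A: "g \<in> carrier G \<Longrightarrow> x \<in> A \<Longrightarrow> g \<otimes> x \<otimes> inv g \<in> A"
  using normal by (rule normal.inv_op_closed2)

lemma prime_dvd_order_not_dvd_pred:
  assumes "Factorial_Ring.prime q" "q dvd order G"
  shows "\<not> q dvd p - 1"
proof
  assume "q dvd p - 1"
  moreover have "p ^ 2 - 1 = (p - 1) * (p + 1)"
    by (cases p) (auto simp: power2_eq_square)
  ultimately have "q dvd p - 1" "q dvd p ^ 2 - 1" by simp_all
  then show False
    using coprime assms coprime_common_divisor not_prime_unit by blast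
qed

lemma prime_dvd_pred_if_centralized_trivial:
  assumes Q: "subgroup Q G" "card Q = q ^ a" and q: "Factorial_Ring.prime q"
    and trivial: "A \<inter> centralizer G Q = {\<one>}"
    and roots: "card {x \<in> A. x [^] p = \<one>} = p"
  shows "q dvd p - 1"
proof -
  let ?R = "{x \<in> A. x [^] p = \<one>}"
  have Q_subset: "Q \<subseteq> carrier G" using Q(1) by (rule subgroup.subset)
  have "\<one> \<in> ?R \<inter> centralizer G Q" using trivial by auto
  then have "?R \<inter> centralizer G Q = {\<one>}" using trivial by blast
  moreover have "q dvd card ?R - card (?R \<inter> centralizer G Q)"
  proof (rule card_centralized_cong_prime_power[OF Q q])
    show "finite ?R" "?R \<subseteq> carrier G" using finite_A A_subset by auto
    show "h \<otimes> y \<otimes> inv h \<in> ?R" if h: "h \<in> Q" and y: "y \<in> ?R" for h y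
    proof -
      have "h \<in> carrier G" "y \<in> carrier G" using h y Q_subset A_subset by auto
      then have "(h \<otimes> y \<otimes> inv h) [^] p = \<one>" using y nat_pow_conjugate by simp
      then show ?thesis using \<open>h \<in> carrier G\<close> y conjugate_in_A by blast
    qed
  qed
  ultimately show ?thesis using roots by simp
qed

lemma prime_power_subgroup_centralizes_A:
  assumes Q: "subgroup Q G" "card Q = q ^ a" and q: "Factorial_Ring.prime q" "q \<noteq> p"
    and q_dvd: "q dvd order G"
  shows "Q \<subseteq> centralizer G A"
proof (rule ccontr)
  let ?F = "A \<inter> centralizer G Q"
  assume not_centralizing: "\<not> Q \<subseteq> centralizer G A"
  have Q_subset: "Q \<subseteq> carrier G" using Q(1) by (rule subgroup.subset)
  have "?F \<noteq> A"
    using not_centralizing subset_centralizer_iff[OF Q_subset A_subset] by blast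
  moreover have F: "subgroup ?F G"
    using subgroup_A centralizer_subgroup[OF Q_subset] by (rule subgroups_Inter_pair)
  ultimately have "card ?F = 1 \<or> card ?F = p"
    using subgroup_of_prime_square_cases[OF prime subgroup_A card_A] by blast
  moreover have "q dvd card A - card ?F"
    by (rule card_centralized_cong_prime_power[OF Q q(1) finite_A A_subset])
      (use conjugate_in_A Q_subset in blast)
  then have q_dvd_F: "q dvd p ^ 2 - card ?F" using card_A by simp
  moreover have "card ?F \<noteq> p"
  proof
    assume "card ?F = p"
    then have "q dvd p * (p - 1)"
      using q_dvd_F by (simp add: power2_eq_square right_diff_distrib')
    then have "q dvd p \<or> q dvd p - 1" using q(1) prime_dvd_mult_iff by blast
    moreover have "\<not> q dvd p" using primes_dvd_imp_eq[OF q(1) prime] q(2) by blast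
    ultimately show False using prime_dvd_order_not_dvd_pred[OF q(1) q_dvd] by blast
  qed
  ultimately have "card ?F = 1" by blast
  then obtain z where "?F = {z}" by (rule card_1_singletonE)
  then have F_trivial: "?F = {\<one>}" using subgroup.one_closed[OF F] by auto
  then have "q dvd p ^ 2 - 1" using q_dvd_F by simp
  then have "\<not> coprime (p ^ 2 - 1) (order G)"
    using coprime_common_divisor[of "p ^ 2 - 1" "order G" q] q(1) q_dvd by auto
  then have "q dvd p - 1"
    using coprime prime_dvd_pred_if_centralized_trivial[OF Q q(1) F_trivial] by blast
  then show False using prime_dvd_order_not_dvd_pred[OF q(1) q_dvd] by blast
qed

lemma index_centralizer_prime_power: "\<exists>k. card (rcosets (centralizer G A)) = p ^ k"
proof (rule ccontr)
  let ?C = "centralizer G A"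
  assume not_prime_power: "\<nexists>k. card (rcosets ?C) = p ^ k"
  have C: "subgroup ?C G" using A_subset by (rule centralizer_subgroup)
  have lagrange_C: "card (rcosets ?C) * card ?C = order G" using lagrange[OF C] .
  moreover have "order G \<noteq> 0" using finite_carrier order_gt_0_iff_finite by simp
  ultimately have "card (rcosets ?C) \<noteq> 0" by (metis mult_zero_left)
  then obtain q where "q \<in># prime_factorization (card (rcosets ?C))" "q \<noteq> p"
    using Ex_other_prime_factor[OF _ _ prime] not_prime_power by auto
  then have q: "Factorial_Ring.prime q" "q dvd card (rcosets ?C)" "q \<noteq> p"
    by (auto simp: in_prime_factors_iff)
  then have q_dvd: "q dvd order G" using lagrange_C by (metis dvd_mult2)
  obtain k where "order G = q ^ multiplicity q (order G) * k"
    using multiplicity_dvd by blast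
  then obtain Q where Q: "subgroup Q G" "card Q = q ^ multiplicity q (order G)"
    using sylow_thm[OF q(1) is_group _ finite_carrier] by blast
  then have "Q \<subseteq> ?C" using prime_power_subgroup_centralizes_A q(1,3) q_dvd by blast
  then show False
    using prime_not_dvd_index_if_contains_sylow[OF finite_carrier q(1) Q C] q(2) by blast
qed

lemma card_conj_class_prime_power:
  assumes "x \<in> A"
  shows "\<exists>i. card (conj_class G x) = p ^ i"
proof -
  have x: "x \<in> carrier G" using assms A_subset by blast
  obtain k where k: "card (rcosets (centralizer G A)) = p ^ k"
    using index_centralizer_prime_power by blast
  have "centralizer G A \<subseteq> centralizer G {x}" using assms by (auto simp: centralizer_def)
  then have "card (conj_class G x) dvd p ^ k"
    using index_dvd_index[OF finite_carrier] centralizer_subgroup A_subset x k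
      card_conj_class_eq_index[OF finite_carrier x]
    by (metis empty_subsetI insert_subset)
  then show ?thesis using divides_primepow_nat[OF prime] by blast
qed

lemma prime_dvd_card_conj_class:
  assumes "x \<in> A" "x \<notin> group_center G"
  shows "p dvd card (conj_class G x)"
proof -
  obtain i where i: "card (conj_class G x) = p ^ i"
    using card_conj_class_prime_power[OF assms(1)] by blast
  have "card (conj_class G x) \<noteq> 1"
    using assms card_conj_class_eq_1_iff A_subset by blast
  then have "i > 0" using i by (metis gr0I power_0)
  then show ?thesis by (simp add: i)
qed

lemma card_A_inter_center: "card (A \<inter> group_center G) = p"
proof -
  let ?N = "A \<inter> group_center G"
  have N: "subgroup ?N G"
    using subgroups_Inter_pair[OF subgroup_A centralizer_subgroup[OF subset_refl]]
    by (simp add: group_center_eq_centralizer)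
  have orbit_eq_iff: "orbit G (conjugation G) x = {x} \<longleftrightarrow> x \<in> group_center G" if "x \<in> A" for x
    using that A_subset conj_class_eq_singleton_iff[of x] conj_class_eq_orbit[of x] by auto
  then have fixed: "{x \<in> A. orbit G (conjugation G) x = {x}} = ?N" by blast
  have "p dvd card A - card {x \<in> A. orbit G (conjugation G) x = {x}}"
  proof (rule group_action.card_diff_fixed_points_dvd[OF conjugation_action finite_A A_subset])
    show "conjugation G g x \<in> A" if "g \<in> carrier G" "x \<in> A" for g x
      using that conjugate_in_A A_subset by (auto simp: conjugation_def)
    show "p dvd card (orbit G (conjugation G) x)" if "x \<in> A" "orbit G (conjugation G) x \<noteq> {x}" for x
    proof -
      have eq: "conj_class G x = orbit G (conjugation G) x" using that A_subset conj_class_eq_orbit by blast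
      have "x \<notin> group_center G" using that orbit_eq_iff by blast
      then show ?thesis using prime_dvd_card_conj_class[OF that(1)] eq by metis
    qed
  qed
  then have p_dvd: "p dvd p ^ 2 - card ?N" using fixed card_A by simp
  have "?N \<noteq> A" using not_central by blast
  then have "card ?N = 1 \<or> card ?N = p"
    using subgroup_of_prime_square_cases[OF prime subgroup_A card_A N] by blast
  moreover have "card ?N \<noteq> 1"
  proof
    assume "card ?N = 1"
    then have "p dvd p ^ 2 - 1" using p_dvd by simp
    moreover have "p dvd p ^ 2" by simp
    ultimately have "p dvd p ^ 2 - (p ^ 2 - 1)" by (rule dvd_diff_nat[rotated])
    then have "p dvd 1" using prime_gt_0_nat[OF prime] by simp
    then show False using prime by simp
  qed
  ultimately show ?thesis by blast
qed

lemma conj_class_noncentral_subset: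
  assumes x: "x \<in> A - group_center G"
  shows "conj_class G x \<subseteq> A - group_center G"
proof
  fix z assume z: "z \<in> conj_class G x"
  have xG: "x \<in> carrier G" using x A_subset by blast
  have "z \<in> A" using z x conjugate_in_A by (auto simp: conj_class_def)
  moreover have "z \<notin> group_center G"
  proof
    assume "z \<in> group_center G"
    then have "conj_class G z = {z}" using \<open>z \<in> A\<close> A_subset conj_class_eq_singleton_iff by blast
    moreover have "conj_class G z = conj_class G x"
      using group_action.orbit_eq_of_mem[OF conjugation_action xG] z \<open>z \<in> A\<close> A_subset
      by (simp add: conj_class_eq_orbit xG subset_eq)
    ultimately have "x = z" using conj_class_self[OF xG] by blast
    then show False using x \<open>z \<in> group_center G\<close> by blast
  qed
  ultimately show "z \<in> A - group_center G" by blast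
qed

lemma card_conj_class_noncentral:
  assumes x: "x \<in> A - group_center G"
  shows "card (conj_class G x) = p"
proof -
  have "card (conj_class G x) \<le> card (A - group_center G)"
    using conj_class_noncentral_subset[OF x] finite_A by (intro card_mono) auto
  also have "\<dots> = p ^ 2 - p"
    using card_Diff_subset_Int[of A "group_center G"] finite_A card_A card_A_inter_center by simp
  also have "\<dots> < p ^ 2" using prime_gt_0_nat[OF prime] by (simp add: power2_eq_square)
  finally have "card (conj_class G x) < p ^ 2" .
  moreover obtain i where i: "card (conj_class G x) = p ^ i"
    using card_conj_class_prime_power x by blast
  ultimately have "i < 2" using power_strict_increasing_iff[OF prime_gt_1_nat[OF prime]] by simp
  moreover have "p dvd p ^ i" using prime_dvd_card_conj_class x i by (metis DiffE)
  then have "i \<noteq> 0" using prime by (metis nat_dvd_1_iff_1 not_prime_1 power_0)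
  ultimately show ?thesis using i by (simp add: numeral_2_eq_2 less_Suc_eq)
qed

lemma centralizer_noncentral_eq_centralizer_A:
  assumes x: "x \<in> A - group_center G"
  shows "centralizer G {x} = centralizer G A"
proof
  show "centralizer G A \<subseteq> centralizer G {x}" using x by (auto simp: centralizer_def)
next
  show "centralizer G {x} \<subseteq> centralizer G A"
  proof
    fix g assume g: "g \<in> centralizer G {x}"
    let ?S = "A \<inter> centralizer G {g}"
    have gG: "g \<in> carrier G" using g by (simp add: centralizer_def)
    have S: "subgroup ?S G"
      using subgroup_A centralizer_subgroup gG by (simp add: subgroups_Inter_pair)
    have "insert x (A \<inter> group_center G) \<subseteq> ?S"
      using x g gG A_subset by (auto simp: centralizer_def group_center_def)
    then have "card (insert x (A \<inter> group_center G)) \<le> card ?S"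
      using finite_A by (intro card_mono) auto
    then have "p + 1 \<le> card ?S"
      using x card_A_inter_center finite_A by simp
    then have "?S = A"
      using subgroup_of_prime_square_cases[OF prime subgroup_A card_A S] prime_gt_0_nat[OF prime]
      by fastforce
    then have "A \<subseteq> centralizer G {g}" by blast
    then show "g \<in> centralizer G A"
      using subset_centralizer_iff[of "{g}" A] gG A_subset by simp
  qed
qed

lemma index_centralizer_A: "card (rcosets (centralizer G A)) = p"
proof -
  obtain x where x: "x \<in> A - group_center G" using not_central by blast
  then have "x \<in> carrier G" using A_subset by blast
  then show ?thesis
    using card_conj_class_eq_index[OF finite_carrier] card_conj_class_noncentral[OF x]
      centralizer_noncentral_eq_centralizer_A[OF x]
    by simp
qed

end

lemma (in group) noncentral_normal_subgroup_of_order_prime_square_if_iso: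
  assumes "finite (carrier G)" "Factorial_Ring.prime p" "A \<lhd> G" "\<not> A \<subseteq> group_center G"
    and iso: "(subgroup_generated G A \<cong> integer_mod_group (p ^ 2) \<and> gcd (p - 1) (order G) = 1)
      \<or> (subgroup_generated G A \<cong> integer_mod_group p \<times>\<times> integer_mod_group p
          \<and> gcd (p ^ 2 - 1) (order G) = 1)"
  shows "noncentral_normal_subgroup_of_order_prime_square G A p"
proof -
  have A: "subgroup A G" using assms(3) by (rule normal_imp_subgroup)
  have p: "p > 0" using prime_gt_0_nat[OF assms(2)] .
  have "card A = p ^ 2 \<and> (coprime (p ^ 2 - 1) (order G)
      \<or> coprime (p - 1) (order G) \<and> card {x \<in> A. x [^] p = \<one>} = p)"
    using iso
  proof
    assume cyclic: "subgroup_generated G A \<cong> integer_mod_group (p ^ 2) \<and> gcd (p - 1) (order G) = 1"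
    then have "card A = card (carrier (integer_mod_group (p ^ 2)))"
      using card_subgroup_eq_card_iso[OF A] by blast
    then have "card A = p ^ 2"
      using p by (simp add: carrier_integer_mod_group del: of_nat_power add: of_nat_power[symmetric])
    moreover have "card {x \<in> A. x [^] p = \<one>} = p"
      using card_roots_of_unity_cyclic[OF A _ p p] cyclic by (simp add: power2_eq_square)
    ultimately show ?thesis using cyclic by (simp add: coprime_iff_gcd_eq_1)
  next
    assume elementary: "subgroup_generated G A \<cong> integer_mod_group p \<times>\<times> integer_mod_group p
      \<and> gcd (p ^ 2 - 1) (order G) = 1"
    then have "card A = card (carrier (integer_mod_group p \<times>\<times> integer_mod_group p))"
      using card_subgroup_eq_card_iso[OF A] by blast
    then have "card A = p ^ 2"
      using p by (simp add: carrier_integer_mod_group card_cartesian_product power2_eq_square)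
    then show ?thesis using elementary by (simp add: coprime_iff_gcd_eq_1)
  qed
  then show ?thesis
    by (intro noncentral_normal_subgroup_of_order_prime_square.intro
        noncentral_normal_subgroup_of_order_prime_square_axioms.intro)
      (use is_group assms(1-4) in blast)+
qed

theorem lemma3p2:
  fixes G :: "('a, 'b) monoid_scheme" and p :: nat
  assumes "group G" and "finite (carrier G)" and "Factorial_Ring.prime p"
    and "\<not> commutator_subgroup G \<subseteq> group_center G"
    and "(subgroup_generated G (commutator_subgroup G) \<cong> integer_mod_group (p^2)
            \<and> gcd (p - 1) (order G) = 1)
         \<or> (subgroup_generated G (commutator_subgroup G)
               \<cong> integer_mod_group p \<times>\<times> integer_mod_group p
            \<and> gcd (p^2 - 1) (order G) = 1)"
  shows "order (G Mod centralizer G (commutator_subgroup G)) = p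
    \<and> card (commutator_subgroup G \<inter> group_center G) = p
    \<and> (\<forall>x \<in> commutator_subgroup G - group_center G. card (conj_class G x) = p)"
proof -
  interpret group G by fact
  interpret noncentral_normal_subgroup_of_order_prime_square G "commutator_subgroup G" p
    using noncentral_normal_subgroup_of_order_prime_square_if_iso[OF assms(2,3)
        derived_self_is_normal assms(4,5)] .
  show ?thesis
    using index_centralizer_A card_A_inter_center card_conj_class_noncentral
    by (simp add: order_def FactGroup_def)
qed

end
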